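(* $E^{ce}_{\max}$ is not binarily reducible to $E^{ce}_{\min}$ (i.e. $E^{ce}_{\max}\not\leq_c^2E^{ce}_{\min}$). However, $E^{ce}_{\min}$ is finitarily reducible to $E^{ce}_{\max}$ (i.e. $E^{ce}_{\min}\leq_c^{<\omega}E^{ce}_{\max}$).
   Context: $W_e$ is the $e$-th c.e. set. $i\,E^{ce}_{\min}\,j\iff\min(W_i)=\min(W_j)$ and $i\,E^{ce}_{\max}\,j\iff\max(W_i)=\max(W_j)$, where the empty set has minimum $+\infty$ and maximum $-\infty$, and all infinite sets have maximum $+\infty$. For equivalence relations $E,F$ on $\omega$ and $n\ge1$, $E\leq_c^nF$ means there is a total computable function mapping each $(x_0,\dots,x_{n-1})\in\omega^n$ to $(y_0,\dots,y_{n-1})\in\omega^n$ with $x_i\,E\,x_j\iff y_i\,F\,y_j$ for all $i<j<n$; $E\leq_c^{<\omega}F$ means such functions exist uniformly in $n$ (one computable function taking $n$ and an $n$-tuple). *)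

theory Defs
  imports Main "HOL-Library.Nat_Bijection" "HOL-Library.Extended_Real"
begin

text \<open>A concrete acceptable-style Goedel numbering of the unary partial recursive
functions (Kleene-style basis with Cantor pairing).  Index e is decoded by
e mod 8 (the kind of the function) and prod_decode (e div 8) (the sub-indices):
  0: constant zero, 1: successor, 2: first projection of a pair, 3: second projection,
  4: composition (a after b), 5: pairing x maps to (a x, b x),
  6: primitive recursion on the second pair component, 7: unbounded minimisation.
phi_rel e x y means that the e-th partial recursive function maps x to y.\<close>

inductive phi_rel :: "nat \<Rightarrow> nat \<Rightarrow> nat \<Rightarrow> bool" where
  pr_zero: "e mod 8 = 0 \<Longrightarrow> phi_rel e x 0"
| pr_succ: "e mod 8 = 1 \<Longrightarrow> phi_rel e x (Suc x)"
| pr_fst: "e mod 8 = 2 \<Longrightarrow> phi_rel e x (fst (prod_decode x))"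
| pr_snd: "e mod 8 = 3 \<Longrightarrow> phi_rel e x (snd (prod_decode x))"
| pr_comp: "e mod 8 = 4 \<Longrightarrow> prod_decode (e div 8) = (a, b) \<Longrightarrow>
            phi_rel b x y \<Longrightarrow> phi_rel a y z \<Longrightarrow> phi_rel e x z"
| pr_pair: "e mod 8 = 5 \<Longrightarrow> prod_decode (e div 8) = (a, b) \<Longrightarrow>
            phi_rel a x y \<Longrightarrow> phi_rel b x z \<Longrightarrow> phi_rel e x (prod_encode (y, z))"
| pr_rec0: "e mod 8 = 6 \<Longrightarrow> prod_decode (e div 8) = (a, b) \<Longrightarrow>
            prod_decode x = (u, 0) \<Longrightarrow> phi_rel a u y \<Longrightarrow> phi_rel e x y"
| pr_recS: "e mod 8 = 6 \<Longrightarrow> prod_decode (e div 8) = (a, b) \<Longrightarrow>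
            prod_decode x = (u, Suc n) \<Longrightarrow> phi_rel e (prod_encode (u, n)) w \<Longrightarrow>
            phi_rel b (prod_encode (u, prod_encode (n, w))) y \<Longrightarrow> phi_rel e x y"
| pr_mu: "e mod 8 = 7 \<Longrightarrow> phi_rel (e div 8) (prod_encode (x, n)) 0 \<Longrightarrow>
          (\<forall>m<n. \<exists>k. phi_rel (e div 8) (prod_encode (x, m)) (Suc k)) \<Longrightarrow> phi_rel e x n"

definition W :: "nat \<Rightarrow> nat set" where
  "W e = {x. \<exists>y. phi_rel e x y}"

definition minW :: "nat \<Rightarrow> ereal" where
  "minW e = (if W e = {} then \<infinity> else ereal (real (Inf (W e))))"

definition maxW :: "nat \<Rightarrow> ereal" where
  "maxW e = (if W e = {} then -\<infinity> else if infinite (W e) then \<infinity>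
             else ereal (real (Max (W e))))"

definition E_min :: "nat \<Rightarrow> nat \<Rightarrow> bool" where
  "E_min i j \<longleftrightarrow> minW i = minW j"

definition E_max :: "nat \<Rightarrow> nat \<Rightarrow> bool" where
  "E_max i j \<longleftrightarrow> maxW i = maxW j"

definition reduces_n :: "nat \<Rightarrow> (nat \<Rightarrow> nat \<Rightarrow> bool) \<Rightarrow> (nat \<Rightarrow> nat \<Rightarrow> bool) \<Rightarrow> bool" where
  "reduces_n n E F \<longleftrightarrow> (\<exists>f :: nat list \<Rightarrow> nat list.
     (\<exists>e. \<forall>xs. length xs = n \<longrightarrow> phi_rel e (list_encode xs) (list_encode (f xs))) \<and>
     (\<forall>xs. length xs = n \<longrightarrow> length (f xs) = n \<and>
        (\<forall>i j. i < j \<and> j < n \<longrightarrow> (E (xs ! i) (xs ! j) \<longleftrightarrow> F (f xs ! i) (f xs ! j)))))"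

text \<open>Finitary reducibility: one computable function, uniform in n \<ge> 1
(n is recoverable from the code of the list).\<close>
definition reduces_fin :: "(nat \<Rightarrow> nat \<Rightarrow> bool) \<Rightarrow> (nat \<Rightarrow> nat \<Rightarrow> bool) \<Rightarrow> bool" where
  "reduces_fin E F \<longleftrightarrow> (\<exists>f :: nat list \<Rightarrow> nat list.
     (\<exists>e. \<forall>xs. xs \<noteq> [] \<longrightarrow> phi_rel e (list_encode xs) (list_encode (f xs))) \<and>
     (\<forall>xs. xs \<noteq> [] \<longrightarrow> length (f xs) = length xs \<and>
        (\<forall>i j. i < j \<and> j < length xs \<longrightarrow> (E (xs ! i) (xs ! j) \<longleftrightarrow> F (f xs ! i) (f xs ! j)))))"

end

theory Submission
  imports Defs
begin

text \<open>
  For the first part, suppose \<open>f\<close> is a computable binary reduction of \<open>E_max\<close> to \<open>E_min\<close>.  By the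
  recursion theorem there is an index \<open>n\<close> such that, with \<open>f [n, 0] = [a, b]\<close>, the set \<open>W n\<close> consists
  of the stages \<open>s\<close> at which the stage-\<open>s\<close> approximations to \<open>min (W a)\<close> and \<open>min (W b)\<close> differ.
  These approximations converge, so \<open>W n\<close> is infinite, i.e. \<open>E_max n 0\<close> as \<open>W 0\<close> is everything,
  exactly when \<open>min (W a) \<noteq> min (W b)\<close>: a contradiction.

  For the second part, given a list \<open>xs\<close> of \<open>n\<close> indices, the \<open>i\<close>-th output set receives
  \<open>s * n + r\<close> at every stage \<open>s\<close> at which some approximation to \<open>min (W (xs ! k))\<close> changes,
  \<open>r\<close> being the least \<open>k\<close> whose current approximation equals that of \<open>xs ! i\<close>.  Its maximum
  is therefore produced at the last change, when all approximations are correct, and two maxima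
  agree iff the two minima do.
\<close>

definition pair_code :: "nat \<Rightarrow> nat \<Rightarrow> nat" (\<open>\<langle>_,/ _\<rangle>\<close>) where
  "\<langle>a, b\<rangle> = prod_encode (a, b)"

definition pfst :: "nat \<Rightarrow> nat" where "pfst x = fst (prod_decode x)"
definition psnd :: "nat \<Rightarrow> nat" where "psnd x = snd (prod_decode x)"

lemma pfst_pair [simp]: "pfst \<langle>a, b\<rangle> = a"
  by (simp add: pfst_def pair_code_def)

lemma psnd_pair [simp]: "psnd \<langle>a, b\<rangle> = b"
  by (simp add: psnd_def pair_code_def)

lemma pair_code_eq_iff [simp]: "\<langle>a, b\<rangle> = \<langle>c, d\<rangle> \<longleftrightarrow> a = c \<and> b = d"
  by (simp add: pair_code_def)

lemma pair_pfst_psnd [simp]: "\<langle>pfst x, psnd x\<rangle> = x"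
  by (simp add: pair_code_def pfst_def psnd_def)

lemma prod_decode_pair_code [simp]: "prod_decode \<langle>a, b\<rangle> = (a, b)"
  by (simp add: pair_code_def)

lemma prod_decode_eq_iff: "prod_decode x = (a, b) \<longleftrightarrow> x = \<langle>a, b\<rangle>"
  by (metis pair_code_def prod_decode_inverse prod_decode_pair_code)

lemma pair_code_0_0 [simp]: "\<langle>0, 0\<rangle> = 0"
  by (simp add: pair_code_def prod_encode_def)

definition comp_index :: "nat \<Rightarrow> nat \<Rightarrow> nat" where "comp_index a b = 4 + 8 * \<langle>a, b\<rangle>"
definition pair_index :: "nat \<Rightarrow> nat \<Rightarrow> nat" where "pair_index a b = 5 + 8 * \<langle>a, b\<rangle>"
definition rec_index :: "nat \<Rightarrow> nat \<Rightarrow> nat" where "rec_index a b = 6 + 8 * \<langle>a, b\<rangle>"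
definition mu_index :: "nat \<Rightarrow> nat" where "mu_index c = 7 + 8 * c"
definition id_index :: nat where "id_index = pair_index 2 3"

primrec const_index :: "nat \<Rightarrow> nat" where
  "const_index 0 = 0"
| "const_index (Suc c) = comp_index 1 (const_index c)"

lemma phi_rel_2_pfst: "phi_rel 2 x (pfst x)"
  unfolding pfst_def by (rule pr_fst) simp

lemma phi_rel_comp_index: "phi_rel b x y \<Longrightarrow> phi_rel a y z \<Longrightarrow> phi_rel (comp_index a b) x z"
  unfolding comp_index_def by (rule pr_comp[where a = a and b = b]) (auto simp: pair_code_def)

lemma phi_rel_pair_index:
  "phi_rel a x y \<Longrightarrow> phi_rel b x z \<Longrightarrow> phi_rel (pair_index a b) x \<langle>y, z\<rangle>"
  unfolding pair_index_def pair_code_def[of y z]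
  by (rule pr_pair[where a = a and b = b]) (auto simp: pair_code_def)

lemma phi_rel_rec_index:
  "phi_rel a u y \<Longrightarrow> phi_rel (rec_index a b) \<langle>u, 0\<rangle> y"
  "phi_rel (rec_index a b) \<langle>u, n\<rangle> w \<Longrightarrow> phi_rel b \<langle>u, \<langle>n, w\<rangle>\<rangle> y \<Longrightarrow>
     phi_rel (rec_index a b) \<langle>u, Suc n\<rangle> y"
  unfolding rec_index_def
  by (auto intro: pr_rec0[where a = a and b = b] pr_recS[where a = a and b = b and u = u and n = n]
           simp: pair_code_def)

lemma phi_rel_mu_index:
  "phi_rel c \<langle>x, n\<rangle> 0 \<Longrightarrow> (\<forall>m<n. \<exists>k. phi_rel c \<langle>x, m\<rangle> (Suc k)) \<Longrightarrow> phi_rel (mu_index c) x n"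
  unfolding mu_index_def pair_code_def by (rule pr_mu) simp_all

lemma phi_rel_const_index: "phi_rel (const_index c) x c"
proof (induction c)
  case (Suc c)
  show ?case
    using phi_rel_comp_index[OF Suc.IH pr_succ[of 1]] by simp
qed (simp add: pr_zero)

lemma phi_rel_id_index: "phi_rel id_index x x"
  using phi_rel_pair_index[OF phi_rel_2_pfst pr_snd[of 3, folded psnd_def]]
  unfolding id_index_def by simp

lemma mu_index_mod_div [simp]: "mu_index c mod 8 = 7" "mu_index c div 8 = c"
  by (simp_all add: mu_index_def)

lemma mu_index_div_8: "e mod 8 = 7 \<Longrightarrow> mu_index (e div 8) = e"
  unfolding mu_index_def by presburger

lemma index_from_decode: "e mod 8 = k \<Longrightarrow> prod_decode (e div 8) = (a, b) \<Longrightarrow> e = k + 8 * \<langle>a, b\<rangle>"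
  by (metis prod_decode_eq_iff mod_mult_div_eq add.commute)

lemma index_cases:
  obtains "e mod 8 = 0" | "e mod 8 = 1" | "e mod 8 = 2" | "e mod 8 = 3"
  | a b where "e = comp_index a b" | a b where "e = pair_index a b"
  | a b where "e = rec_index a b" | c where "e = mu_index c"
proof -
  have e: "e = e mod 8 + 8 * \<langle>pfst (e div 8), psnd (e div 8)\<rangle>"
    by simp
  have "e mod 8 < 8" by simp
  then consider "e mod 8 = 0" | "e mod 8 = 1" | "e mod 8 = 2" | "e mod 8 = 3" | "e mod 8 = 4"
    | "e mod 8 = 5" | "e mod 8 = 6" | "e mod 8 = 7"
    by linarith
  then show thesis
    using that e unfolding comp_index_def pair_index_def rec_index_def mu_index_def
    by cases (metis, metis, metis, metis, metis, metis, metis, metis mod_mult_div_eq add.commute)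
qed

section \<open>Total computable functions\<close>

definition computable :: "(nat \<Rightarrow> nat) \<Rightarrow> bool" where
  "computable f \<longleftrightarrow> (\<exists>e. \<forall>x. phi_rel e x (f x))"

definition computable_pred :: "(nat \<Rightarrow> bool) \<Rightarrow> bool" where
  "computable_pred P \<longleftrightarrow> computable (\<lambda>x. if P x then 0 else 1)"

named_theorems computable_intros

lemma computable_comp:
  assumes "computable f" "computable g"
  shows "computable (\<lambda>x. f (g x))"
  using assms phi_rel_comp_index unfolding computable_def by blast

lemma computable_basic: "computable Suc" "computable pfst" "computable psnd"
  unfolding computable_def using pr_succ[of 1] phi_rel_2_pfst pr_snd[of 3, folded psnd_def] by auto

lemma computable_id [computable_intros]: "computable (\<lambda>x. x)"
  unfolding computable_def using phi_rel_id_index by blast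

lemma computable_const [computable_intros]: "computable (\<lambda>x. c)"
  unfolding computable_def using phi_rel_const_index by blast

lemma computable_Suc [computable_intros]:
  "computable f \<Longrightarrow> computable (\<lambda>x. Suc (f x))"
  by (rule computable_comp[of Suc]) (simp_all add: computable_basic)

lemma computable_pfst [computable_intros]:
  "computable f \<Longrightarrow> computable (\<lambda>x. pfst (f x))"
  by (rule computable_comp[of pfst]) (simp_all add: computable_basic)

lemma computable_psnd [computable_intros]:
  "computable f \<Longrightarrow> computable (\<lambda>x. psnd (f x))"
  by (rule computable_comp[of psnd]) (simp_all add: computable_basic)

lemma computable_pair [computable_intros]:
  assumes "computable f" "computable g"
  shows "computable (\<lambda>x. \<langle>f x, g x\<rangle>)"
  using assms phi_rel_pair_index unfolding computable_def by blast

lemma computable_rec_nat [computable_intros]: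
  assumes "computable a" "computable (\<lambda>p. b (pfst p) (pfst (psnd p)) (psnd (psnd p)))"
    and "computable n"
  shows "computable (\<lambda>x. rec_nat (a x) (b x) (n x))"
proof -
  obtain ea eb en where ea: "\<And>x. phi_rel ea x (a x)" and en: "\<And>x. phi_rel en x (n x)"
    and eb: "\<And>p. phi_rel eb p (b (pfst p) (pfst (psnd p)) (psnd (psnd p)))"
    using assms unfolding computable_def by blast
  have rec: "phi_rel (rec_index ea eb) \<langle>x, m\<rangle> (rec_nat (a x) (b x) m)" for x m
  proof (induction m)
    case (Suc m)
    show ?case
      using phi_rel_rec_index(2)[OF Suc eb] by simp
  qed (simp add: phi_rel_rec_index(1) ea)
  have "phi_rel (comp_index (rec_index ea eb) (pair_index id_index en)) x (rec_nat (a x) (b x) (n x))" for x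
    by (rule phi_rel_comp_index[OF phi_rel_pair_index[OF phi_rel_id_index en] rec])
  then show ?thesis
    unfolding computable_def by blast
qed

lemma computable_diff [computable_intros]:
  assumes "computable f" "computable g"
  shows "computable (\<lambda>x. f x - g x)"
proof -
  have "rec_nat a (\<lambda>k w. w - 1) n = a - n" for a n :: nat
    by (induction n) auto
  moreover have "rec_nat 0 (\<lambda>k w. k) n = n - 1" for n :: nat
    by (cases n) auto
  moreover have "computable (\<lambda>x. rec_nat (f x) (\<lambda>k w. rec_nat 0 (\<lambda>k w. k) w) (g x))"
    by (intro computable_intros assms)
  ultimately show ?thesis by simp
qed

lemma computable_add [computable_intros]:
  assumes "computable f" "computable g"
  shows "computable (\<lambda>x. f x + g x)"
proof -
  have "rec_nat a (\<lambda>k w. Suc w) n = a + n" for a n :: nat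
    by (induction n) auto
  moreover have "computable (\<lambda>x. rec_nat (f x) (\<lambda>k w. Suc w) (g x))"
    by (intro computable_intros assms)
  ultimately show ?thesis by simp
qed

lemma computable_mult [computable_intros]:
  assumes "computable f" "computable g"
  shows "computable (\<lambda>x. f x * g x)"
proof -
  have "rec_nat 0 (\<lambda>k w. w + a) n = a * n" for a n :: nat
    by (induction n) auto
  moreover have "computable (\<lambda>x. rec_nat 0 (\<lambda>k w. w + f x) (g x))"
    by (intro computable_intros assms computable_comp[OF assms(1)])
  ultimately show ?thesis by (simp add: mult.commute)
qed

lemma computable_if [computable_intros]:
  assumes "computable_pred P" "computable f" "computable g"
  shows "computable (\<lambda>x. if P x then f x else g x)"
proof -
  have "(\<lambda>x. if P x then f x else g x) = (\<lambda>x. rec_nat (f x) (\<lambda>k w. g x) (if P x then 0 else 1))"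
    by auto
  moreover have "computable (\<lambda>p. g (pfst p))"
    by (rule computable_comp[OF assms(3) computable_basic(2)])
  ultimately show ?thesis
    using computable_rec_nat[where b = "\<lambda>x k w. g x"] assms
    unfolding computable_pred_def by simp
qed

text \<open>Truth values are coded as \<open>0\<close> for true and \<open>1\<close> for false, so the connectives become
  truncated arithmetic.\<close>

lemma computable_pred_eq [computable_intros]:
  assumes "computable f" "computable g"
  shows "computable_pred (\<lambda>x. f x = g x)"
proof -
  have "(if a = b then 0 else 1) = 1 - (1 - ((a - b) + (b - a)))" for a b :: nat
    by auto
  moreover have "computable (\<lambda>x. 1 - (1 - ((f x - g x) + (g x - f x))))"
    by (intro computable_intros assms)
  ultimately show ?thesis unfolding computable_pred_def by presburger
qed

lemma computable_pred_le [computable_intros]: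
  assumes "computable f" "computable g"
  shows "computable_pred (\<lambda>x. f x \<le> g x)"
proof -
  have "(if a \<le> b then 0 else 1) = 1 - (1 - (a - b))" for a b :: nat
    by auto
  moreover have "computable (\<lambda>x. 1 - (1 - (f x - g x)))"
    by (intro computable_intros assms)
  ultimately show ?thesis unfolding computable_pred_def by presburger
qed

lemma computable_pred_less [computable_intros]:
  assumes "computable f" "computable g"
  shows "computable_pred (\<lambda>x. f x < g x)"
  using computable_pred_le[OF computable_Suc[OF assms(1)] assms(2)]
  by (simp add: Suc_le_eq)

lemma computable_pred_not [computable_intros]:
  assumes "computable_pred P"
  shows "computable_pred (\<lambda>x. \<not> P x)"
proof -
  have "(\<lambda>x. if \<not> P x then 0 else 1) = (\<lambda>x. 1 - (if P x then 0 else 1 :: nat))"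
    by auto
  then show ?thesis
    using assms unfolding computable_pred_def
    by (simp add: computable_diff computable_const)
qed

lemma computable_pred_conj [computable_intros]:
  assumes "computable_pred P" "computable_pred Q"
  shows "computable_pred (\<lambda>x. P x \<and> Q x)"
proof -
  have "(\<lambda>x. if P x \<and> Q x then 0 else 1) =
      (\<lambda>x. 1 - (1 - ((if P x then 0 else 1) + (if Q x then 0 else 1 :: nat))))"
    by auto
  then show ?thesis
    using assms unfolding computable_pred_def
    by (simp add: computable_diff computable_add computable_const)
qed

lemma computable_pred_disj [computable_intros]:
  assumes "computable_pred P" "computable_pred Q"
  shows "computable_pred (\<lambda>x. P x \<or> Q x)"
  using computable_pred_not[OF computable_pred_conj[OF
      computable_pred_not[OF assms(1)] computable_pred_not[OF assms(2)]]]
  by simp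

lemma computable_pred_comp:
  "computable_pred P \<Longrightarrow> computable f \<Longrightarrow> computable_pred (\<lambda>x. P (f x))"
  unfolding computable_pred_def by (drule computable_comp) simp_all

lemma computable_comp2:
  assumes "computable (\<lambda>p. F (pfst p) (psnd p))" "computable f" "computable g"
  shows "computable (\<lambda>x. F (f x) (g x))"
  using computable_comp[OF assms(1) computable_pair[OF assms(2,3)]] by simp

lemma computable_mod_8 [computable_intros]:
  assumes "computable f"
  shows "computable (\<lambda>x. f x mod 8)"
proof -
  have "rec_nat 0 (\<lambda>k w. if w = 7 then 0 else Suc w) n = n mod 8" for n :: nat
    by (induction n) (auto simp: mod_Suc)
  moreover have "computable (\<lambda>x. rec_nat 0 (\<lambda>k w. if w = 7 then 0 else Suc w) (f x))"
    by (intro computable_intros assms)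
  ultimately show ?thesis by simp
qed

lemma computable_div_8 [computable_intros]:
  assumes "computable f"
  shows "computable (\<lambda>x. f x div 8)"
proof -
  have "rec_nat 0 (\<lambda>k w. if k mod 8 = 7 then Suc w else w) n = n div 8" for n :: nat
    by (induction n) (auto simp: div_Suc mod_Suc)
  moreover have "computable (\<lambda>x. rec_nat 0 (\<lambda>k w. if k mod 8 = 7 then Suc w else w) (f x))"
    by (intro computable_intros assms)
  ultimately show ?thesis by simp
qed

section \<open>A stack machine for the numbering\<close>

text \<open>To enumerate \<open>W e\<close> in stages, \<open>phi_rel\<close> is simulated by a stack machine whose states
  and frames are numbers, so that one step of the machine is computable.  A state is either a
  call of index \<open>e\<close> on argument \<open>x\<close> or a return of value \<open>v\<close>, together with a stack of frames
  coded as \<open>0\<close> (empty) or \<open>Suc \<langle>frame, rest\<rangle>\<close>.\<close>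

abbreviation call_state :: "nat \<Rightarrow> nat \<Rightarrow> nat \<Rightarrow> nat" where
  "call_state e x st \<equiv> \<langle>0, \<langle>e, \<langle>x, st\<rangle>\<rangle>\<rangle>"

abbreviation ret_state :: "nat \<Rightarrow> nat \<Rightarrow> nat" where
  "ret_state v st \<equiv> \<langle>Suc 0, \<langle>v, st\<rangle>\<rangle>"

abbreviation push :: "nat \<Rightarrow> nat \<Rightarrow> nat" where
  "push F st \<equiv> Suc \<langle>F, st\<rangle>"

abbreviation comp_frame :: "nat \<Rightarrow> nat" where
  "comp_frame a \<equiv> \<langle>0, a\<rangle>"

abbreviation pair_frame :: "nat \<Rightarrow> nat \<Rightarrow> nat" where
  "pair_frame b x \<equiv> \<langle>Suc 0, \<langle>b, x\<rangle>\<rangle>"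

abbreviation pair_result_frame :: "nat \<Rightarrow> nat" where
  "pair_result_frame y \<equiv> \<langle>2, y\<rangle>"

abbreviation rec_frame :: "nat \<Rightarrow> nat \<Rightarrow> nat \<Rightarrow> nat" where
  "rec_frame b u n \<equiv> \<langle>3, \<langle>b, \<langle>u, n\<rangle>\<rangle>\<rangle>"

abbreviation mu_frame :: "nat \<Rightarrow> nat \<Rightarrow> nat \<Rightarrow> nat" where
  "mu_frame e x m \<equiv> \<langle>4, \<langle>e, \<langle>x, m\<rangle>\<rangle>\<rangle>"

definition step_call :: "nat \<Rightarrow> nat \<Rightarrow> nat \<Rightarrow> nat" where
  "step_call e x st =
    (let a = pfst (e div 8); b = psnd (e div 8) in
     if e mod 8 = 0 then ret_state 0 st
     else if e mod 8 = 1 then ret_state (Suc x) st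
     else if e mod 8 = 2 then ret_state (pfst x) st
     else if e mod 8 = 3 then ret_state (psnd x) st
     else if e mod 8 = 4 then call_state b x (push (comp_frame a) st)
     else if e mod 8 = 5 then call_state a x (push (pair_frame b x) st)
     else if e mod 8 = 6 then
       (if psnd x = 0 then call_state a (pfst x) st
        else call_state e \<langle>pfst x, psnd x - 1\<rangle> (push (rec_frame b (pfst x) (psnd x - 1)) st))
     else call_state (e div 8) \<langle>x, 0\<rangle> (push (mu_frame e x 0) st))"

text \<open>Every frame tag above \<open>3\<close> acts as a minimisation frame, so that every number is a
  meaningful stack.\<close>

definition step_ret :: "nat \<Rightarrow> nat \<Rightarrow> nat" where
  "step_ret v st =
    (if st = 0 then ret_state v 0 else
     let F = pfst (st - 1); r = psnd (st - 1); a = psnd F in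
     if pfst F = 0 then call_state a v r
     else if pfst F = 1 then call_state (pfst a) (psnd a) (push (pair_result_frame v) r)
     else if pfst F = 2 then ret_state \<langle>a, v\<rangle> r
     else if pfst F = 3 then call_state (pfst a) \<langle>pfst (psnd a), \<langle>psnd (psnd a), v\<rangle>\<rangle> r
     else if v = 0 then ret_state (psnd (psnd a)) r
     else call_state (pfst a div 8) \<langle>pfst (psnd a), Suc (psnd (psnd a))\<rangle>
       (push (mu_frame (pfst a) (pfst (psnd a)) (Suc (psnd (psnd a)))) r))"

lemma step_call_index:
  "e mod 8 = 0 \<Longrightarrow> step_call e x st = ret_state 0 st"
  "e mod 8 = 1 \<Longrightarrow> step_call e x st = ret_state (Suc x) st"
  "e mod 8 = 2 \<Longrightarrow> step_call e x st = ret_state (pfst x) st"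
  "e mod 8 = 3 \<Longrightarrow> step_call e x st = ret_state (psnd x) st"
  "step_call (comp_index a b) x st = call_state b x (push (comp_frame a) st)"
  "step_call (pair_index a b) x st = call_state a x (push (pair_frame b x) st)"
  "step_call (rec_index a b) \<langle>u, 0\<rangle> st = call_state a u st"
  "step_call (rec_index a b) \<langle>u, Suc n\<rangle> st =
     call_state (rec_index a b) \<langle>u, n\<rangle> (push (rec_frame b u n) st)"
  "step_call (mu_index c) x st = call_state c \<langle>x, 0\<rangle> (push (mu_frame (mu_index c) x 0) st)"
  by (simp_all add: step_call_def comp_index_def pair_index_def rec_index_def mu_index_def)

definition step :: "nat \<Rightarrow> nat" where
  "step Q = (if pfst Q = 0 then step_call (pfst (psnd Q)) (pfst (psnd (psnd Q))) (psnd (psnd (psnd Q)))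
             else step_ret (pfst (psnd Q)) (psnd (psnd Q)))"

lemma step_call_state [simp]: "step (call_state e x st) = step_call e x st"
  by (simp add: step_def)

lemma step_ret_state [simp]: "step (ret_state v st) = step_ret v st"
  by (simp add: step_def)

lemma step_ret_push:
  "step_ret v 0 = ret_state v 0"
  "step_ret v (push (comp_frame a) r) = call_state a v r"
  "step_ret v (push (pair_frame b x) r) = call_state b x (push (pair_result_frame v) r)"
  "step_ret v (push (pair_result_frame y) r) = ret_state \<langle>y, v\<rangle> r"
  "step_ret v (push (rec_frame b u n) r) = call_state b \<langle>u, \<langle>n, v\<rangle>\<rangle> r"
  "3 < t \<Longrightarrow> step_ret 0 (push \<langle>t, \<langle>e, \<langle>x, m\<rangle>\<rangle>\<rangle> r) = ret_state m r"
  "3 < t \<Longrightarrow> step_ret (Suc k) (push \<langle>t, \<langle>e, \<langle>x, m\<rangle>\<rangle>\<rangle> r) =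
     call_state (e div 8) \<langle>x, Suc m\<rangle> (push (mu_frame e x (Suc m)) r)"
  by (simp_all add: step_ret_def)

definition run :: "nat \<Rightarrow> nat \<Rightarrow> nat" where "run k Q = (step ^^ k) Q"

lemma run_0 [simp]: "run 0 Q = Q"
  by (simp add: run_def)

lemma run_Suc: "run (Suc k) Q = run k (step Q)"
  by (simp only: run_def funpow_Suc_right comp_def)

lemma run_add: "run (k + l) Q = run l (run k Q)"
  by (simp only: run_def add.commute[of k l] funpow_add comp_def)

lemma run_final [simp]: "run k (ret_state v 0) = ret_state v 0"
  by (induction k) (simp_all add: run_Suc step_ret_push)

definition reaches :: "nat \<Rightarrow> nat \<Rightarrow> bool" where
  "reaches A B \<longleftrightarrow> (\<exists>k. run k A = B)"

lemma reaches_refl: "reaches A A"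
  unfolding reaches_def by (metis run_0)

lemma reaches_step: "step A = B \<Longrightarrow> reaches A B"
  unfolding reaches_def by (metis run_0 run_Suc)

lemma reaches_trans [trans]: "reaches A B \<Longrightarrow> reaches B C \<Longrightarrow> reaches A C"
  unfolding reaches_def by (metis run_add)

lemma reaches_comp_index:
  assumes "\<And>st. reaches (call_state b x st) (ret_state y st)"
    and "\<And>st. reaches (call_state a y st) (ret_state z st)"
  shows "reaches (call_state (comp_index a b) x st) (ret_state z st)"
proof -
  have "reaches (call_state (comp_index a b) x st) (call_state b x (push (comp_frame a) st))"
    by (intro reaches_step) (simp add: step_call_index)
  also have "reaches \<dots> (ret_state y (push (comp_frame a) st))"
    by (rule assms(1))
  also have "reaches \<dots> (call_state a y st)"
    by (intro reaches_step) (simp add: step_ret_push)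
  also have "reaches \<dots> (ret_state z st)"
    by (rule assms(2))
  finally show ?thesis .
qed

lemma reaches_pair_index:
  assumes "\<And>st. reaches (call_state a x st) (ret_state y st)"
    and "\<And>st. reaches (call_state b x st) (ret_state z st)"
  shows "reaches (call_state (pair_index a b) x st) (ret_state \<langle>y, z\<rangle> st)"
proof -
  have "reaches (call_state (pair_index a b) x st) (call_state a x (push (pair_frame b x) st))"
    by (intro reaches_step) (simp add: step_call_index)
  also have "reaches \<dots> (ret_state y (push (pair_frame b x) st))"
    by (rule assms(1))
  also have "reaches \<dots> (call_state b x (push (pair_result_frame y) st))"
    by (intro reaches_step) (simp add: step_ret_push)
  also have "reaches \<dots> (ret_state z (push (pair_result_frame y) st))"
    by (rule assms(2))
  also have "reaches \<dots> (ret_state \<langle>y, z\<rangle> st)"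
    by (intro reaches_step) (simp add: step_ret_push)
  finally show ?thesis .
qed

lemma reaches_rec_index_Suc:
  assumes "\<And>st. reaches (call_state (rec_index a b) \<langle>u, n\<rangle> st) (ret_state w st)"
    and "\<And>st. reaches (call_state b \<langle>u, \<langle>n, w\<rangle>\<rangle> st) (ret_state y st)"
  shows "reaches (call_state (rec_index a b) \<langle>u, Suc n\<rangle> st) (ret_state y st)"
proof -
  have "reaches (call_state (rec_index a b) \<langle>u, Suc n\<rangle> st)
      (call_state (rec_index a b) \<langle>u, n\<rangle> (push (rec_frame b u n) st))"
    by (intro reaches_step) (simp add: step_call_index)
  also have "reaches \<dots> (ret_state w (push (rec_frame b u n) st))"
    by (rule assms(1))
  also have "reaches \<dots> (call_state b \<langle>u, \<langle>n, w\<rangle>\<rangle> st)"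
    by (intro reaches_step) (simp add: step_ret_push)
  also have "reaches \<dots> (ret_state y st)"
    by (rule assms(2))
  finally show ?thesis .
qed

lemma reaches_mu_index:
  assumes zero: "\<And>st. reaches (call_state c \<langle>x, n\<rangle> st) (ret_state 0 st)"
    and pos: "\<And>m. m < n \<Longrightarrow> \<exists>k. \<forall>st. reaches (call_state c \<langle>x, m\<rangle> st) (ret_state (Suc k) st)"
  shows "reaches (call_state (mu_index c) x st) (ret_state n st)"
proof -
  let ?search = "\<lambda>m. call_state c \<langle>x, m\<rangle> (push (mu_frame (mu_index c) x m) st)"
  have search: "reaches (?search 0) (?search m)" if "m \<le> n" for m
    using that
  proof (induction m)
    case (Suc m)
    then obtain k where "reaches (?search m) (ret_state (Suc k) (push (mu_frame (mu_index c) x m) st))"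
      using pos by (meson Suc_le_lessD)
    also have "reaches \<dots> (?search (Suc m))"
      by (intro reaches_step) (simp add: step_ret_push)
    finally show ?case
      using Suc reaches_trans by (meson Suc_leD)
  qed (rule reaches_refl)
  have "reaches (call_state (mu_index c) x st) (?search 0)"
    by (intro reaches_step) (simp add: step_call_index)
  also have "reaches \<dots> (?search n)"
    by (rule search) simp
  also have "reaches \<dots> (ret_state 0 (push (mu_frame (mu_index c) x n) st))"
    by (rule zero)
  also have "reaches \<dots> (ret_state n st)"
    by (intro reaches_step) (simp add: step_ret_push)
  finally show ?thesis .
qed

lemma phi_rel_reaches_ret: "phi_rel e x y \<Longrightarrow> reaches (call_state e x st) (ret_state y st)"
proof (induction arbitrary: st rule: phi_rel.induct)
  case (pr_comp e a b x y z)
  then have "e = comp_index a b"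
    unfolding comp_index_def by (simp add: index_from_decode)
  then show ?case
    using reaches_comp_index[OF pr_comp.IH] by simp
next
  case (pr_pair e a b x y z)
  then have "e = pair_index a b"
    unfolding pair_index_def by (simp add: index_from_decode)
  then show ?case
    using reaches_pair_index[OF pr_pair.IH] by (simp add: pair_code_def)
next
  case (pr_rec0 e a b x u y)
  then have "e = rec_index a b" "x = \<langle>u, 0\<rangle>"
    unfolding rec_index_def by (simp_all add: index_from_decode prod_decode_eq_iff)
  then have "reaches (call_state e x st) (call_state a u st)"
    by (intro reaches_step) (simp add: step_call_index)
  then show ?case
    using pr_rec0.IH by (rule reaches_trans)
next
  case (pr_recS e a b x u n w y)
  then have "e = rec_index a b" "x = \<langle>u, Suc n\<rangle>"
    unfolding rec_index_def by (simp_all add: index_from_decode prod_decode_eq_iff)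
  then show ?case
    using reaches_rec_index_Suc[of a b u n w] pr_recS.IH by (simp add: pair_code_def)
next
  case (pr_mu e x n)
  have "\<exists>k. \<forall>st. reaches (call_state (e div 8) \<langle>x, m\<rangle> st) (ret_state (Suc k) st)" if "m < n" for m
    using pr_mu.IH(2) that by (auto simp: pair_code_def)
  then have "reaches (call_state (mu_index (e div 8)) x st) (ret_state n st)"
    using pr_mu.IH(1) by (intro reaches_mu_index) (simp_all add: pair_code_def)
  then show ?case
    using pr_mu(1) by (simp add: mu_index_div_8)
qed (auto intro: reaches_step simp: step_call_index pfst_def psnd_def)

text \<open>For soundness every number must be read as a state: a frame with tag above \<open>3\<close> at
  stage \<open>m\<close> promises that, if \<open>e\<close> is a minimisation index whose search returned positive
  values below \<open>m\<close> and \<open>v\<close> at \<open>m\<close>, then the final value is that of \<open>e\<close> at \<open>x\<close>.\<close>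

definition frame_rel :: "nat \<Rightarrow> nat \<Rightarrow> nat \<Rightarrow> bool" where
  "frame_rel F v r \<longleftrightarrow>
    (let a = psnd F in
     if pfst F = 0 then phi_rel a v r
     else if pfst F = 1 then (\<exists>z. phi_rel (pfst a) (psnd a) z \<and> r = \<langle>v, z\<rangle>)
     else if pfst F = 2 then r = \<langle>a, v\<rangle>
     else if pfst F = 3 then phi_rel (pfst a) \<langle>pfst (psnd a), \<langle>psnd (psnd a), v\<rangle>\<rangle> r
     else pfst a mod 8 = 7 \<longrightarrow>
       (\<forall>m<psnd (psnd a). \<exists>k. phi_rel (pfst a div 8) \<langle>pfst (psnd a), m\<rangle> (Suc k)) \<longrightarrow>
       phi_rel (pfst a div 8) \<langle>pfst (psnd a), psnd (psnd a)\<rangle> v \<longrightarrow>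
       phi_rel (pfst a) (pfst (psnd a)) r)"

lemma frame_rel_simps [simp]:
  "frame_rel (comp_frame a) v r \<longleftrightarrow> phi_rel a v r"
  "frame_rel (pair_frame b x) v r \<longleftrightarrow> (\<exists>z. phi_rel b x z \<and> r = \<langle>v, z\<rangle>)"
  "frame_rel (pair_result_frame y) v r \<longleftrightarrow> r = \<langle>y, v\<rangle>"
  "frame_rel (rec_frame b u n) v r \<longleftrightarrow> phi_rel b \<langle>u, \<langle>n, v\<rangle>\<rangle> r"
  "3 < t \<Longrightarrow> frame_rel \<langle>t, \<langle>e, \<langle>x, m\<rangle>\<rangle>\<rangle> v r \<longleftrightarrow>
     (e mod 8 = 7 \<longrightarrow> (\<forall>m'<m. \<exists>k. phi_rel (e div 8) \<langle>x, m'\<rangle> (Suc k)) \<longrightarrow>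
      phi_rel (e div 8) \<langle>x, m\<rangle> v \<longrightarrow> phi_rel e x r)"
  by (simp_all add: frame_rel_def)

lemma frame_cases:
  obtains a where "F = comp_frame a"
  | b x where "F = pair_frame b x"
  | y where "F = pair_result_frame y"
  | b u n where "F = rec_frame b u n"
  | t e x m where "3 < t" "F = \<langle>t, \<langle>e, \<langle>x, m\<rangle>\<rangle>\<rangle>"
proof -
  have F: "F = \<langle>pfst F, \<langle>pfst (psnd F), \<langle>pfst (psnd (psnd F)), psnd (psnd (psnd F))\<rangle>\<rangle>\<rangle>"
    by simp
  consider "pfst F = 0" | "pfst F = 1" | "pfst F = 2" | "pfst F = 3" | "3 < pfst F"
    by linarith
  then show thesis
    using that F by cases (metis pair_pfst_psnd, metis One_nat_def pair_pfst_psnd,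
        metis pair_pfst_psnd, metis, metis)
qed

inductive stack_rel :: "nat \<Rightarrow> nat \<Rightarrow> nat \<Rightarrow> bool" where
  stack_rel_empty: "stack_rel 0 v v"
| stack_rel_push: "frame_rel F v w \<Longrightarrow> stack_rel r w y \<Longrightarrow> stack_rel (push F r) v y"

lemma stack_rel_0_iff [simp]: "stack_rel 0 v y \<longleftrightarrow> v = y"
  by (auto elim: stack_rel.cases intro: stack_rel_empty)

lemma stack_rel_push_iff [simp]:
  "stack_rel (push F r) v y \<longleftrightarrow> (\<exists>w. frame_rel F v w \<and> stack_rel r w y)"
proof
  assume "stack_rel (push F r) v y"
  then show "\<exists>w. frame_rel F v w \<and> stack_rel r w y"
    by cases auto
qed (auto intro: stack_rel_push)

definition state_yields :: "nat \<Rightarrow> nat \<Rightarrow> bool" where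
  "state_yields Q y \<longleftrightarrow>
    (if pfst Q = 0
     then \<exists>v. phi_rel (pfst (psnd Q)) (pfst (psnd (psnd Q))) v \<and> stack_rel (psnd (psnd (psnd Q))) v y
     else stack_rel (psnd (psnd Q)) (pfst (psnd Q)) y)"

lemma state_yields_simps [simp]:
  "state_yields (call_state e x st) y \<longleftrightarrow> (\<exists>v. phi_rel e x v \<and> stack_rel st v y)"
  "state_yields (ret_state v st) y \<longleftrightarrow> stack_rel st v y"
  by (simp_all add: state_yields_def)

lemma state_yields_step_call:
  assumes "state_yields (step_call e x st) y"
  shows "\<exists>v. phi_rel e x v \<and> stack_rel st v y"
proof (cases e rule: index_cases)
  case 1
  show ?thesis using assms pr_zero[OF 1] by (auto simp: step_call_index(1)[OF 1])
next
  case 2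
  show ?thesis using assms pr_succ[OF 2] by (auto simp: step_call_index(2)[OF 2])
next
  case 3
  show ?thesis using assms pr_fst[OF 3, folded pfst_def] by (auto simp: step_call_index(3)[OF 3])
next
  case 4
  show ?thesis using assms pr_snd[OF 4, folded psnd_def] by (auto simp: step_call_index(4)[OF 4])
next
  case (5 a b)
  then show ?thesis using assms by (auto simp: step_call_index intro: phi_rel_comp_index)
next
  case (6 a b)
  then show ?thesis using assms by (auto simp: step_call_index intro: phi_rel_pair_index)
next
  case (7 a b)
  obtain u n where x: "x = \<langle>u, n\<rangle>"
    by (metis pair_pfst_psnd)
  show ?thesis
    using assms unfolding 7 x
    by (cases n) (auto simp: step_call_index intro: phi_rel_rec_index)
next
  case (8 c)
  then show ?thesis using assms by (auto simp: step_call_index intro: phi_rel_mu_index)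
qed

lemma state_yields_step_ret:
  assumes "state_yields (step_ret v st) y"
  shows "stack_rel st v y"
proof (cases "st = 0")
  case True
  then show ?thesis using assms by (simp add: step_ret_push(1))
next
  case False
  then obtain F r where st: "st = push F r"
    by (metis Suc_pred' bot_nat_0.not_eq_extremum pair_pfst_psnd)
  show ?thesis
  proof (cases F rule: frame_cases)
    case (5 t e x m)
    show ?thesis
    proof (cases v)
      case 0
      then have "stack_rel r m y"
        using assms 5 by (simp add: st step_ret_push(6))
      moreover have "frame_rel F 0 m"
        using 5 phi_rel_mu_index[of "e div 8" x m] by (auto simp: mu_index_div_8)
      ultimately show ?thesis
        unfolding st 0 by auto
    next
      case (Suc k)
      then obtain v' w where v': "phi_rel (e div 8) \<langle>x, Suc m\<rangle> v'"
        and w: "frame_rel (mu_frame e x (Suc m)) v' w" "stack_rel r w y"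
        using assms 5 by (auto simp: st step_ret_push(7))
      have "frame_rel F v w"
        using 5 v' w(1) Suc by (auto simp: less_Suc_eq)
      then show ?thesis
        unfolding st using w(2) by auto
    qed
  qed (use assms st in \<open>auto simp: step_ret_push\<close>)
qed

lemma state_yields_step:
  assumes "state_yields (step Q) y"
  shows "state_yields Q y"
proof (cases "pfst Q = 0")
  case True
  then have "Q = call_state (pfst (psnd Q)) (pfst (psnd (psnd Q))) (psnd (psnd (psnd Q)))"
    by (metis pair_pfst_psnd)
  then show ?thesis
    using assms state_yields_step_call by (metis state_yields_simps(1) step_call_state)
next
  case False
  then have "step Q = step_ret (pfst (psnd Q)) (psnd (psnd Q))"
    by (simp add: step_def)
  then show ?thesis
    using assms False state_yields_step_ret by (simp add: state_yields_def)
qed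

lemma run_ret_state_yields: "run k Q = ret_state y 0 \<Longrightarrow> state_yields Q y"
  by (induction k arbitrary: Q) (simp_all add: run_Suc state_yields_step)

lemma phi_rel_iff_run: "phi_rel e x y \<longleftrightarrow> (\<exists>k. run k (call_state e x 0) = ret_state y 0)"
  using phi_rel_reaches_ret[of e x y 0] run_ret_state_yields[of _ "call_state e x 0" y]
  unfolding reaches_def by auto

lemma phi_rel_functional: "phi_rel e x y \<Longrightarrow> phi_rel e x y' \<Longrightarrow> y = y'"
  unfolding phi_rel_iff_run by (metis run_add run_final add.commute pair_code_eq_iff)

section \<open>Stagewise enumeration of the c.e. sets\<close>

definition halted :: "nat \<Rightarrow> bool" where
  "halted Q \<longleftrightarrow> pfst Q \<noteq> 0 \<and> psnd (psnd Q) = 0"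

lemma halted_step: "halted Q \<Longrightarrow> step Q = ret_state (pfst (psnd Q)) 0"
  by (simp add: halted_def step_def step_ret_def)

lemma halted_run: "halted Q \<Longrightarrow> halted (run k Q)"
  by (cases k) (simp_all add: run_Suc halted_step halted_def)

definition halts_within :: "nat \<Rightarrow> nat \<Rightarrow> nat \<Rightarrow> bool" where
  "halts_within s e x \<longleftrightarrow> halted (run s (call_state e x 0))"

lemma halts_within_mono: "halts_within s e x \<Longrightarrow> s \<le> t \<Longrightarrow> halts_within t e x"
  unfolding halts_within_def by (metis halted_run le_add_diff_inverse run_add)

lemma mem_W_iff_halts_within: "x \<in> W e \<longleftrightarrow> (\<exists>s. halts_within s e x)"
proof
  assume "x \<in> W e"
  then obtain y k where "run k (call_state e x 0) = ret_state y 0"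
    unfolding W_def phi_rel_iff_run by blast
  then have "halts_within k e x"
    unfolding halts_within_def halted_def by simp
  then show "\<exists>s. halts_within s e x" ..
next
  assume "\<exists>s. halts_within s e x"
  then obtain s where "halted (run s (call_state e x 0))"
    unfolding halts_within_def by blast
  then have "run (s + 1) (call_state e x 0) = ret_state (pfst (psnd (run s (call_state e x 0)))) 0"
    by (simp only: run_add) (simp add: run_Suc halted_step)
  then show "x \<in> W e"
    unfolding W_def phi_rel_iff_run by blast
qed

lemma computable_step_call [computable_intros]:
  "computable f \<Longrightarrow> computable g \<Longrightarrow> computable h \<Longrightarrow>
    computable (\<lambda>x. step_call (f x) (g x) (h x))"
  unfolding step_call_def Let_def by (intro computable_intros)

lemma computable_step_ret [computable_intros]:
  "computable f \<Longrightarrow> computable g \<Longrightarrow> computable (\<lambda>x. step_ret (f x) (g x))"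
  unfolding step_ret_def Let_def by (intro computable_intros)

lemma computable_run [computable_intros]:
  assumes "computable f" "computable g"
  shows "computable (\<lambda>x. run (f x) (g x))"
proof -
  have "run k Q = rec_nat Q (\<lambda>_ Q. step Q) k" for k Q
    by (induction k) (simp_all add: run_def)
  moreover have "computable (\<lambda>x. rec_nat (g x) (\<lambda>_ Q. step Q) (f x))"
    unfolding step_def by (intro computable_intros assms)
  ultimately show ?thesis by simp
qed

lemma computable_halts_within [computable_intros]:
  "computable f \<Longrightarrow> computable g \<Longrightarrow> computable h \<Longrightarrow>
    computable_pred (\<lambda>x. halts_within (f x) (g x) (h x))"
  unfolding halts_within_def halted_def by (intro computable_intros)

definition bounded_least :: "(nat \<Rightarrow> bool) \<Rightarrow> nat \<Rightarrow> nat" where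
  "bounded_least P s = (if \<exists>z\<le>s. P z then Suc (LEAST z. P z) else 0)"

lemma bounded_least_witness: "P i \<Longrightarrow> bounded_least P i = Suc (LEAST z. P z)"
  unfolding bounded_least_def by auto

lemma bounded_least_0: "bounded_least P 0 = (if P 0 then 1 else 0)"
  by (simp add: bounded_least_def)

lemma bounded_least_Suc:
  "bounded_least P (Suc s) =
    (if bounded_least P s = 0 then (if P (Suc s) then Suc (Suc s) else 0) else bounded_least P s)"
proof (cases "\<exists>z\<le>s. P z")
  case False
  then have "(\<exists>z\<le>Suc s. P z) \<longleftrightarrow> P (Suc s)"
    using le_Suc_eq by blast
  moreover have "P (Suc s) \<Longrightarrow> (LEAST z. P z) = Suc s"
    using False by (intro Least_equality) (auto simp: not_less_eq_eq[symmetric])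
  ultimately show ?thesis
    using False unfolding bounded_least_def by auto
qed (auto simp: bounded_least_def le_Suc_eq)

lemma computable_bounded_least [computable_intros]:
  assumes P: "computable_pred (\<lambda>p. P (pfst p) (psnd p))" and "computable n"
  shows "computable (\<lambda>x. bounded_least (P x) (n x))"
proof -
  have P': "computable_pred (\<lambda>x. P (f x) (g x))"
    if "computable f" "computable g" for f g
    using computable_pred_comp[OF P computable_pair[OF that]] by simp
  have "bounded_least Q s =
      rec_nat (if Q 0 then 1 else 0) (\<lambda>k r. if r = 0 then (if Q (Suc k) then Suc (Suc k) else 0) else r) s"
    for Q s
    by (induction s) (simp_all add: bounded_least_0 bounded_least_Suc)
  moreover have "computable (\<lambda>x. rec_nat (if P x 0 then 1 else 0)
      (\<lambda>k r. if r = 0 then (if P x (Suc k) then Suc (Suc k) else 0) else r) (n x))"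
    by (intro computable_intros assms(2) P')
  ultimately show ?thesis by simp
qed

lemma computable_pred_bounded_ex [computable_intros]:
  assumes P: "computable_pred (\<lambda>p. P (pfst p) (psnd p))" and n: "computable n"
  shows "computable_pred (\<lambda>x. \<exists>k<n x. P x k)"
proof -
  have ex_iff: "(\<exists>k<m. Q k) \<longleftrightarrow> bounded_least (\<lambda>k. Q k \<and> k < m) m \<noteq> 0" for Q m
    by (auto simp: bounded_least_def)
  have "computable_pred (\<lambda>p. P (pfst p) (psnd p) \<and> psnd p < n (pfst p))"
    by (intro computable_intros P computable_comp[OF n])
  then have "computable_pred (\<lambda>x. bounded_least (\<lambda>k. P x k \<and> k < n x) (n x) \<noteq> 0)"
    by (rule computable_pred_not[OF computable_pred_eq[OF
          computable_bounded_least[where P = "\<lambda>x k. P x k \<and> k < n x", OF _ n]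
          computable_const]])
  with ex_iff show ?thesis by simp
qed

definition min_stage :: "nat \<Rightarrow> nat \<Rightarrow> nat" where
  "min_stage s e = bounded_least (halts_within s e) s"

definition min_code :: "nat \<Rightarrow> nat" where
  "min_code e = (if W e = {} then 0 else Suc (Inf (W e)))"

lemma E_min_iff_min_code: "E_min i j \<longleftrightarrow> min_code i = min_code j"
  unfolding E_min_def minW_def min_code_def by auto

lemma computable_min_stage [computable_intros]:
  assumes "computable f" "computable g"
  shows "computable (\<lambda>x. min_stage (f x) (g x))"
proof -
  have "computable (\<lambda>p. f (pfst p))" "computable (\<lambda>p. g (pfst p))"
    using assms by (auto intro: computable_comp computable_basic)
  then show ?thesis
    unfolding min_stage_def by (intro computable_intros assms)
qed

lemma eventually_min_stage: "\<forall>\<^sub>F s in sequentially. min_stage s e = min_code e"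
proof (cases "W e = {}")
  case True
  then have "\<not> halts_within s e z" for s z
    using mem_W_iff_halts_within by blast
  then have "min_stage s e = min_code e" for s
    using True by (simp add: min_stage_def min_code_def bounded_least_def)
  then show ?thesis by simp
next
  case False
  define z where "z = Inf (W e)"
  have "z \<in> W e"
    using False unfolding z_def by (rule Inf_nat_def1)
  then obtain s0 where s0: "halts_within s0 e z"
    by (auto simp: mem_W_iff_halts_within)
  have "min_stage s e = min_code e" if "max s0 z \<le> s" for s
  proof -
    have "halts_within s e z"
      using s0 that by (auto intro: halts_within_mono)
    moreover have "z \<le> y" if "halts_within s e y" for y
      unfolding z_def using that mem_W_iff_halts_within by (blast intro: cInf_lower bdd_below_bot)
    ultimately have "(LEAST y. halts_within s e y) = z"
      by (rule Least_equality)
    then show ?thesis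
      using \<open>halts_within s e z\<close> \<open>max s0 z \<le> s\<close> False
      unfolding min_stage_def min_code_def z_def bounded_least_def by auto
  qed
  then show ?thesis
    unfolding eventually_sequentially by blast
qed

definition search_index :: "nat \<Rightarrow> nat \<Rightarrow> nat" where
  "search_index g r = mu_index (comp_index g (pair_index r id_index))"

lemma computable_index_constructors [computable_intros]:
  "computable f \<Longrightarrow> computable g \<Longrightarrow> computable (\<lambda>x. comp_index (f x) (g x))"
  "computable f \<Longrightarrow> computable g \<Longrightarrow> computable (\<lambda>x. pair_index (f x) (g x))"
  "computable f \<Longrightarrow> computable (\<lambda>x. mu_index (f x))"
  "computable f \<Longrightarrow> computable g \<Longrightarrow> computable (\<lambda>x. search_index (f x) (g x))"
  unfolding comp_index_def pair_index_def mu_index_def search_index_def id_index_def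
  by (intro computable_intros; assumption)+

lemma computable_const_index [computable_intros]:
  assumes "computable f"
  shows "computable (\<lambda>x. const_index (f x))"
proof -
  have "const_index c = rec_nat 0 (\<lambda>_ i. comp_index 1 i) c" for c
    by (induction c) simp_all
  moreover have "computable (\<lambda>x. rec_nat 0 (\<lambda>_ i. comp_index 1 i) (f x))"
    by (intro computable_intros assms)
  ultimately show ?thesis by simp
qed

lemma phi_rel_mu_index_zero:
  assumes "phi_rel (mu_index c) x n"
  shows "phi_rel c \<langle>x, n\<rangle> 0"
  using assms by (cases rule: phi_rel.cases) (simp_all add: pair_code_def)

lemma W_mu_index:
  assumes c: "\<And>z s. phi_rel c \<langle>z, s\<rangle> (if Q z s then 0 else 1)"
  shows "W (mu_index c) = {z. \<exists>s. Q z s}"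
proof (intro set_eqI iffI)
  fix z assume "z \<in> W (mu_index c)"
  then obtain n where "phi_rel c \<langle>z, n\<rangle> 0"
    unfolding W_def by (blast dest: phi_rel_mu_index_zero)
  then have "Q z n"
    using c[of z n] phi_rel_functional by (metis zero_neq_one)
  then show "z \<in> {z. \<exists>s. Q z s}" by blast
next
  fix z assume "z \<in> {z. \<exists>s. Q z s}"
  define n where "n = (LEAST s. Q z s)"
  have "Q z n"
    using \<open>z \<in> {z. \<exists>s. Q z s}\<close> unfolding n_def by (auto intro: LeastI)
  then have "phi_rel c \<langle>z, n\<rangle> 0"
    using c[of z n] by simp
  moreover have "\<forall>m<n. \<exists>k. phi_rel c \<langle>z, m\<rangle> (Suc k)"
    using c not_less_Least unfolding n_def by (metis One_nat_def)
  ultimately have "phi_rel (mu_index c) z n"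
    by (rule phi_rel_mu_index)
  then show "z \<in> W (mu_index c)"
    unfolding W_def by blast
qed

lemma W_search_index:
  assumes g: "\<And>p. phi_rel g p (if P (pfst p) (pfst (psnd p)) (psnd (psnd p)) then 0 else 1)"
    and r: "\<And>p. phi_rel r p a"
  shows "W (search_index g r) = {z. \<exists>s. P a z s}"
proof -
  have "phi_rel (comp_index g (pair_index r id_index)) \<langle>z, s\<rangle> (if P a z s then 0 else 1)" for z s
    using phi_rel_comp_index[OF phi_rel_pair_index[OF r[of "\<langle>z, s\<rangle>"] phi_rel_id_index] g] by simp
  then show ?thesis
    unfolding search_index_def by (rule W_mu_index)
qed

lemma uniform_ce_index:
  assumes "computable_pred (\<lambda>q. P (pfst q) (pfst (psnd q)) (psnd (psnd q)))"
  obtains idx where "computable idx" "\<And>a. W (idx a) = {z. \<exists>s. P a z s}"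
proof -
  obtain g where g: "\<And>q. phi_rel g q (if P (pfst q) (pfst (psnd q)) (psnd (psnd q)) then 0 else 1)"
    using assms unfolding computable_pred_def computable_def by blast
  have "computable (\<lambda>a. search_index g (const_index a))"
    by (intro computable_intros)
  then show thesis
    using that W_search_index[OF g phi_rel_const_index] by blast
qed

text \<open>Kleene's recursion theorem, in the form of an index whose constant output is computed
  from that index itself.\<close>

lemma constant_index_fixpoint:
  assumes "computable F"
  obtains r where "\<And>x. phi_rel r x (F r)"
proof -
  have "computable (\<lambda>w. F (comp_index w (const_index w)))"
    by (rule computable_comp[OF assms]) (intro computable_intros)
  then obtain t where t: "\<And>w. phi_rel t w (F (comp_index w (const_index w)))"
    unfolding computable_def by blast
  show thesis
    by (rule that, rule phi_rel_comp_index[OF phi_rel_const_index t])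
qed

lemma self_referential_ce_index:
  assumes h: "\<And>a. phi_rel q a (h a)"
    and P: "computable_pred (\<lambda>p. P (pfst p) (pfst (psnd p)) (psnd (psnd p)))"
  obtains n where "W n = {z. \<exists>s. P (h n) z s}"
proof -
  obtain g where g: "\<And>p. phi_rel g p (if P (pfst p) (pfst (psnd p)) (psnd (psnd p)) then 0 else 1)"
    using P unfolding computable_pred_def computable_def by blast
  have "computable (\<lambda>r. search_index g (comp_index q r))"
    by (intro computable_intros)
  then obtain r where r: "\<And>x. phi_rel r x (search_index g (comp_index q r))"
    using constant_index_fixpoint by blast
  show thesis
    by (rule that, rule W_search_index[OF g phi_rel_comp_index[OF r h]])
qed

definition code_hd :: "nat \<Rightarrow> nat" where "code_hd c = pfst (c - 1)"
definition code_tl :: "nat \<Rightarrow> nat" where "code_tl c = psnd (c - 1)"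
definition code_drop :: "nat \<Rightarrow> nat \<Rightarrow> nat" where "code_drop c k = (code_tl ^^ k) c"
definition code_nth :: "nat \<Rightarrow> nat \<Rightarrow> nat" where "code_nth c k = code_hd (code_drop c k)"
definition code_length :: "nat \<Rightarrow> nat" where "code_length c = (LEAST k. code_drop c k = 0)"

lemma code_tl_list_encode: "code_tl (list_encode xs) = list_encode (tl xs)"
proof (cases xs)
  case Nil
  have "psnd 0 = 0"
    using psnd_pair[of 0 0] by simp
  then show ?thesis
    using Nil by (simp add: code_tl_def)
qed (simp add: code_tl_def pair_code_def[symmetric])

lemma code_drop_list_encode: "code_drop (list_encode xs) k = list_encode (drop k xs)"
  by (induction k) (simp_all add: code_drop_def code_tl_list_encode drop_Suc tl_drop)

lemma code_nth_list_encode: "k < length xs \<Longrightarrow> code_nth (list_encode xs) k = xs ! k"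
  by (simp add: code_nth_def code_hd_def code_drop_list_encode Cons_nth_drop_Suc[symmetric]
      pair_code_def[symmetric])

lemma code_length_list_encode: "code_length (list_encode xs) = length xs"
  unfolding code_length_def code_drop_list_encode
  by (rule Least_equality) (auto simp: list_encode_eq[of _ "[]", simplified])

lemma length_le_list_encode: "length xs \<le> list_encode xs"
proof (induction xs)
  case (Cons x xs)
  then show ?case
    using le_prod_encode_2[of "list_encode xs" x] by simp
qed simp

lemma computable_code_drop [computable_intros]:
  assumes "computable f" "computable g"
  shows "computable (\<lambda>x. code_drop (f x) (g x))"
proof -
  have "code_drop c k = rec_nat c (\<lambda>_ w. psnd (w - 1)) k" for c k
    by (induction k) (simp_all add: code_drop_def code_tl_def)
  moreover have "computable (\<lambda>x. rec_nat (f x) (\<lambda>_ w. psnd (w - 1)) (g x))"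
    by (intro computable_intros assms)
  ultimately show ?thesis by simp
qed

lemma computable_code_nth [computable_intros]:
  "computable f \<Longrightarrow> computable g \<Longrightarrow> computable (\<lambda>x. code_nth (f x) (g x))"
  unfolding code_nth_def code_hd_def by (intro computable_intros)

section \<open>No binary reduction of \<open>E_max\<close> to \<open>E_min\<close>\<close>

lemma finite_min_stage_disagreement_iff:
  "finite {s. min_stage s a \<noteq> min_stage s b} \<longleftrightarrow> min_code a = min_code b"
proof -
  have "finite {s. min_stage s a \<noteq> min_stage s b} \<longleftrightarrow>
      (\<forall>\<^sub>F s in sequentially. min_stage s a = min_stage s b)"
    by (simp add: cofinite_eq_sequentially[symmetric] eventually_cofinite)
  also have "\<dots> \<longleftrightarrow> min_code a = min_code b"
  proof
    assume "\<forall>\<^sub>F s in sequentially. min_stage s a = min_stage s b"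
    with eventually_min_stage[of a] eventually_min_stage[of b]
    have "\<forall>\<^sub>F s in sequentially. min_code a = min_code b"
      by eventually_elim simp
    then show "min_code a = min_code b" by simp
  next
    assume "min_code a = min_code b"
    from eventually_min_stage[of a] eventually_min_stage[of b]
    show "\<forall>\<^sub>F s in sequentially. min_stage s a = min_stage s b"
      by eventually_elim (simp add: \<open>min_code a = min_code b\<close>)
  qed
  finally show ?thesis .
qed

lemma E_max_0_iff: "E_max n 0 \<longleftrightarrow> infinite (W n)"
proof -
  have "W 0 = UNIV"
    unfolding W_def using pr_zero[of 0] by auto
  then show ?thesis
    unfolding E_max_def maxW_def by auto
qed

lemma not_reduces_2_E_max_E_min: "\<not> reduces_n 2 E_max E_min"
proof
  assume "reduces_n 2 E_max E_min"
  then obtain f ef where ef: "\<And>xs. length xs = 2 \<Longrightarrow> phi_rel ef (list_encode xs) (list_encode (f xs))"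
    and red: "\<And>xs. length xs = 2 \<Longrightarrow> length (f xs) = 2 \<and> (E_max (xs ! 0) (xs ! 1) \<longleftrightarrow> E_min (f xs ! 0) (f xs ! 1))"
    unfolding reduces_n_def by fastforce
  have "computable (\<lambda>a. Suc \<langle>a, Suc \<langle>0, 0\<rangle>\<rangle>)"
    by (intro computable_intros)
  then obtain lt where lt: "\<And>a. phi_rel lt a (list_encode [a, 0])"
    unfolding computable_def by (fastforce simp: pair_code_def)
  have h: "phi_rel (comp_index ef lt) a (list_encode (f [a, 0]))" for a
    using phi_rel_comp_index[OF lt ef[of "[a, 0]"]] by simp
  have "computable_pred (\<lambda>q. min_stage (pfst (psnd q)) (code_nth (pfst q) 0) \<noteq>
      min_stage (pfst (psnd q)) (code_nth (pfst q) 1))"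
    by (intro computable_intros)
  then obtain n where Wn: "W n = {z. \<exists>s::nat. min_stage z (code_nth (list_encode (f [n, 0])) 0) \<noteq>
      min_stage z (code_nth (list_encode (f [n, 0])) 1)}"
    by (rule self_referential_ce_index[OF h,
          where P = "\<lambda>c z s. min_stage z (code_nth c 0) \<noteq> min_stage z (code_nth c 1)"])
  obtain a b where ab: "f [n, 0] = [a, b]"
    using red[of "[n, 0]"] by (auto simp: numeral_2_eq_2 length_Suc_conv)
  have "W n = {z. min_stage z a \<noteq> min_stage z b}"
    using Wn by (simp add: ab code_nth_list_encode del: list_encode.simps)
  then have "E_max n 0 \<longleftrightarrow> \<not> E_min a b"
    by (simp add: E_max_0_iff finite_min_stage_disagreement_iff E_min_iff_min_code)
  moreover have "E_max n 0 \<longleftrightarrow> E_min a b"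
    using red[of "[n, 0]"] by (simp add: ab)
  ultimately show False by blast
qed

section \<open>A finitary reduction of \<open>E_min\<close> to \<open>E_max\<close>\<close>

lemma computable_code_length [computable_intros]:
  assumes "computable f"
  shows "computable (\<lambda>x. code_length (f x))"
proof -
  have "code_length c = bounded_least (\<lambda>k. code_drop c k = 0) c - 1" for c
  proof -
    obtain xs where c: "c = list_encode xs"
      by (metis list_decode_inverse)
    have "code_drop c (length xs) = 0" "length xs \<le> c"
      by (simp_all add: c code_drop_list_encode length_le_list_encode)
    then show ?thesis
      unfolding bounded_least_def code_length_def by auto
  qed
  moreover have "computable (\<lambda>x. bounded_least (\<lambda>k. code_drop (f x) k = 0) (f x) - 1)"
    by (intro computable_intros assms computable_comp[OF assms computable_basic(2)])
  ultimately show ?thesis by simp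
qed

lemma computable_list_encode_map [computable_intros]:
  assumes Y: "computable (\<lambda>p. Y (pfst p) (psnd p))" and n: "computable n"
  shows "computable (\<lambda>x. list_encode (map (Y x) [0..<n x]))"
proof -
  have "rec_nat 0 (\<lambda>j w. Suc \<langle>F (m - Suc j), w\<rangle>) k = list_encode (map F [m - k..<m])"
    if "k \<le> m" for F m k
    using that
  proof (induction k)
    case (Suc k)
    then have "[m - Suc k..<m] = (m - Suc k) # [m - k..<m]"
      by (simp add: upt_conv_Cons Suc_diff_Suc)
    with Suc show ?case
      by (simp add: pair_code_def)
  qed simp
  moreover have "computable (\<lambda>x. rec_nat 0 (\<lambda>j w. Suc \<langle>Y x (n x - Suc j), w\<rangle>) (n x))"
    by (intro computable_intros computable_comp2[OF Y] n computable_comp[OF n])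
  ultimately show ?thesis by simp
qed

definition entry_stage :: "nat \<Rightarrow> nat \<Rightarrow> nat \<Rightarrow> nat" where
  "entry_stage L s k = min_stage s (code_nth L k)"

definition change_stage :: "nat \<Rightarrow> nat \<Rightarrow> bool" where
  "change_stage L s \<longleftrightarrow> s = 0 \<or> (\<exists>k<code_length L. entry_stage L s k \<noteq> entry_stage L (s - 1) k)"

definition class_rep :: "nat \<Rightarrow> nat \<Rightarrow> nat \<Rightarrow> nat" where
  "class_rep L s i = (LEAST k. entry_stage L s k = entry_stage L s i)"

definition stage_tag :: "nat \<Rightarrow> nat \<Rightarrow> nat \<Rightarrow> nat" where
  "stage_tag L s i = s * code_length L + class_rep L s i"

definition last_change :: "nat \<Rightarrow> nat" where
  "last_change L = Max {s. change_stage L s}"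

lemma computable_stage_tag:
  "computable_pred (\<lambda>q. change_stage (pfst (pfst q)) (psnd (psnd q)) \<and>
     pfst (psnd q) = stage_tag (pfst (pfst q)) (psnd (psnd q)) (psnd (pfst q)))"
proof -
  have "class_rep L s i = bounded_least (\<lambda>k. entry_stage L s k = entry_stage L s i) i - 1" for L s i
    unfolding class_rep_def by (simp add: bounded_least_witness)
  then show ?thesis
    unfolding change_stage_def stage_tag_def entry_stage_def
    by (simp only:) (intro computable_intros)
qed

lemma class_rep_le: "class_rep L s i \<le> i"
  unfolding class_rep_def by (rule Least_le) simp

lemma class_rep_eq_iff: "class_rep L s i = class_rep L s j \<longleftrightarrow> entry_stage L s i = entry_stage L s j"
proof
  have rep: "entry_stage L s (class_rep L s k) = entry_stage L s k" for k
    unfolding class_rep_def by (rule LeastI[of _ k]) simp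
  assume "class_rep L s i = class_rep L s j"
  then show "entry_stage L s i = entry_stage L s j"
    using rep by metis
qed (simp add: class_rep_def)

lemma stage_tag_eq_iff: "stage_tag L s i = stage_tag L s j \<longleftrightarrow> entry_stage L s i = entry_stage L s j"
  by (simp add: stage_tag_def class_rep_eq_iff)

lemma eventually_entry_stage:
  "\<forall>\<^sub>F s in sequentially. \<forall>k<length xs. entry_stage (list_encode xs) s k = min_code (xs ! k)"
proof -
  have "\<forall>\<^sub>F s in sequentially. \<forall>k\<in>{..<length xs}. entry_stage (list_encode xs) s k = min_code (xs ! k)"
    by (rule eventually_ball_finite)
      (simp_all add: entry_stage_def code_nth_list_encode eventually_min_stage)
  then show ?thesis
    by (rule eventually_mono) simp
qed

lemma finite_change_stages: "finite {s. change_stage (list_encode xs) s}"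
proof -
  obtain S where S: "\<And>s k. S \<le> s \<Longrightarrow> k < length xs \<Longrightarrow> entry_stage (list_encode xs) s k = min_code (xs ! k)"
    using eventually_entry_stage[of xs] unfolding eventually_sequentially by blast
  have "s \<le> S" if "change_stage (list_encode xs) s" for s
  proof (rule ccontr)
    assume "\<not> s \<le> S"
    then have "s \<noteq> 0" "\<forall>k<length xs. entry_stage (list_encode xs) s k = entry_stage (list_encode xs) (s - 1) k"
      using S by auto
    with that show False
      unfolding change_stage_def code_length_list_encode by blast
  qed
  then show ?thesis
    unfolding finite_nat_set_iff_bounded_le by blast
qed

lemma change_stage_le_last_change:
  "change_stage (list_encode xs) s \<Longrightarrow> s \<le> last_change (list_encode xs)"
  unfolding last_change_def using finite_change_stages by simp

lemma change_stage_last_change: "change_stage (list_encode xs) (last_change (list_encode xs))"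
  unfolding last_change_def using finite_change_stages
  by (rule Max_in[THEN CollectD]) (auto simp: change_stage_def)

lemma entry_stage_last_change:
  assumes "k < length xs"
  shows "entry_stage (list_encode xs) (last_change (list_encode xs)) k = min_code (xs ! k)"
proof -
  define L where "L = list_encode xs"
  have stable: "entry_stage L (last_change L + d) k = entry_stage L (last_change L) k" for d
  proof (induction d)
    case (Suc d)
    have "\<not> change_stage L (last_change L + Suc d)"
      using change_stage_le_last_change unfolding L_def by fastforce
    then show ?case
      using Suc assms unfolding change_stage_def L_def code_length_list_encode by auto
  qed simp
  obtain S where "\<And>s. S \<le> s \<Longrightarrow> entry_stage L s k = min_code (xs ! k)"
    using eventually_entry_stage[of xs] assms unfolding eventually_sequentially L_def by blast
  then show ?thesis
    using stable[of S] unfolding L_def by simp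
qed

lemma Max_stage_tags:
  assumes "k < length xs"
  defines "L \<equiv> list_encode xs"
  shows "Max ((\<lambda>s. stage_tag L s k) ` {s. change_stage L s}) = stage_tag L (last_change L) k"
proof (rule Max_eqI)
  show "finite ((\<lambda>s. stage_tag L s k) ` {s. change_stage L s})"
    unfolding L_def using finite_change_stages by simp
  show "stage_tag L (last_change L) k \<in> (\<lambda>s. stage_tag L s k) ` {s. change_stage L s}"
    unfolding L_def using change_stage_last_change by simp
next
  fix t assume "t \<in> (\<lambda>s. stage_tag L s k) ` {s. change_stage L s}"
  then obtain s where s: "change_stage L s" "t = stage_tag L s k" by blast
  have "s \<le> last_change L"
    using s(1) unfolding L_def by (rule change_stage_le_last_change)
  moreover have "class_rep L s k < length xs"
    using class_rep_le[of L s k] assms(1) by simp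
  ultimately show "t \<le> stage_tag L (last_change L) k"
  proof (cases "s = last_change L")
    case False
    with \<open>s \<le> last_change L\<close> have "Suc s * length xs \<le> last_change L * length xs"
      by (intro mult_le_mono1) simp
    with \<open>class_rep L s k < length xs\<close> show ?thesis
      by (simp add: s(2) stage_tag_def L_def code_length_list_encode)
  qed (simp add: s(2))
qed

lemma reduces_fin_E_min_E_max: "reduces_fin E_min E_max"
proof -
  obtain idx where idx: "computable idx"
    and W_idx: "\<And>a. W (idx a) = {z. \<exists>s. change_stage (pfst a) s \<and> z = stage_tag (pfst a) s (psnd a)}"
    using uniform_ce_index[OF computable_stage_tag] by blast
  define f where "f xs = map (\<lambda>k. idx \<langle>list_encode xs, k\<rangle>) [0..<length xs]" for xs
  have "computable (\<lambda>L. list_encode (map (\<lambda>k. idx \<langle>L, k\<rangle>) [0..<code_length L]))"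
    by (intro computable_intros computable_comp[OF idx])
  then obtain e where e: "\<And>L. phi_rel e L (list_encode (map (\<lambda>k. idx \<langle>L, k\<rangle>) [0..<code_length L]))"
    unfolding computable_def by blast
  have computable: "phi_rel e (list_encode xs) (list_encode (f xs))" for xs
    using e[of "list_encode xs"] by (simp add: f_def code_length_list_encode)
  have correct: "E_min (xs ! i) (xs ! j) \<longleftrightarrow> E_max (f xs ! i) (f xs ! j)"
    if "i < length xs" "j < length xs" for xs i j
  proof -
    define L where "L = list_encode xs"
    have "maxW (f xs ! k) = ereal (stage_tag L (last_change L) k)" if "k < length xs" for k
    proof -
      have "W (f xs ! k) = (\<lambda>s. stage_tag L s k) ` {s. change_stage L s}"
        using that by (auto simp: f_def W_idx L_def)
      moreover have "{s. change_stage L s} \<noteq> {}"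
        using change_stage_last_change unfolding L_def by blast
      ultimately show ?thesis
        using that Max_stage_tags finite_change_stages unfolding maxW_def L_def by auto
    qed
    then have "E_max (f xs ! i) (f xs ! j) \<longleftrightarrow>
        stage_tag L (last_change L) i = stage_tag L (last_change L) j"
      using that by (simp add: E_max_def)
    also have "\<dots> \<longleftrightarrow> min_code (xs ! i) = min_code (xs ! j)"
      using that by (simp add: stage_tag_eq_iff entry_stage_last_change L_def)
    also have "\<dots> \<longleftrightarrow> E_min (xs ! i) (xs ! j)"
      by (simp add: E_min_iff_min_code)
    finally show ?thesis by simp
  qed
  show ?thesis
    unfolding reduces_fin_def
    by (rule exI[of _ f]) (use computable correct in \<open>auto simp: f_def\<close>)
qed

theorem proposition4p1:
  shows "\<not> reduces_n 2 E_max E_min \<and> reduces_fin E_min E_max"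
  using not_reduces_2_E_max_E_min reduces_fin_E_min_E_max by blast

end
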